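(* Let $m\ge3$ and $\Omega=\{B\subset\mathcal M:1\le|B|\le m-2\}$. The singleton partition $\mathcal S$ is (a) a minimizer of $\Delta$ (i.e. $\Delta(\mathcal S)=\mathbf I(X_{\mathcal M})$) if and only if $\Delta(\mathcal S)\le\Delta(\mathcal P_B)$ for all $B\in\Omega$; (b) the unique minimizer of $\Delta$ if and only if $\Delta(\mathcal S)<\Delta(\mathcal P_B)$ for all $B\in\Omega$.
   Context: Let $\mathcal M=\{1,\dots,m\}$, and let $X_{\mathcal M}$ be jointly distributed finite-valued random variables, with $X_A=(X_i:i\in A)$. For a partition $\mathcal P$ of $\mathcal M$ with $|\mathcal P|\ge2$, $\Delta(\mathcal P)=\frac1{|\mathcal P|-1}[\sum_{A\in\mathcal P}H(X_A)-H(X_{\mathcal M})]$, and $\mathbf I(X_{\mathcal M})=\min_{\mathcal P}\Delta(\mathcal P)$ over all such partitions. $\mathcal S=\{\{1\},\dots,\{m\}\}$. For a nonempty $B=\{b_1,\dots,b_{|B|}\}\subsetneq\mathcal M$, $\mathcal P_B=\{B^c,\{b_1\},\dots,\{b_{|B|}\}\}$. *)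

theory Defs
  imports "HOL-Probability.Probability_Mass_Function" "HOL-Library.Disjoint_Sets"
begin

text \<open>The joint distribution of X_1,...,X_m is a pmf on tuples (nat => 'a);
  coordinate i is X_i.  X_A is the projection onto the coordinates in A.\<close>

definition proj :: "nat set \<Rightarrow> (nat \<Rightarrow> 'a) \<Rightarrow> (nat \<Rightarrow> 'a)" where
  "proj A x = (\<lambda>i. if i \<in> A then x i else undefined)"

definition ent :: "'b pmf \<Rightarrow> real" where
  "ent p = - (\<Sum>y\<in>set_pmf p. pmf p y * log 2 (pmf p y))"

definition H :: "(nat \<Rightarrow> 'a) pmf \<Rightarrow> nat set \<Rightarrow> real" where
  "H X A = ent (map_pmf (proj A) X)"

definition Mset :: "nat \<Rightarrow> nat set" where
  "Mset m = {1..m}"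

definition Delta :: "nat \<Rightarrow> (nat \<Rightarrow> 'a) pmf \<Rightarrow> nat set set \<Rightarrow> real" where
  "Delta m X P = ((\<Sum>A\<in>P. H X A) - H X (Mset m)) / (real (card P) - 1)"

definition partitions2 :: "nat \<Rightarrow> nat set set set" where
  "partitions2 m = {P. partition_on (Mset m) P \<and> card P \<ge> 2}"

definition MI :: "nat \<Rightarrow> (nat \<Rightarrow> 'a) pmf \<Rightarrow> real" where
  "MI m X = Min (Delta m X ` partitions2 m)"

definition singletons :: "nat \<Rightarrow> nat set set" where
  "singletons m = (\<lambda>i. {i}) ` Mset m"

definition PB :: "nat \<Rightarrow> nat set \<Rightarrow> nat set set" where
  "PB m B = insert (Mset m - B) ((\<lambda>b. {b}) ` B)"

definition Omega :: "nat \<Rightarrow> nat set set" where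
  "Omega m = {B. B \<subseteq> Mset m \<and> 1 \<le> card B \<and> card B \<le> m - 2}"

end

theory Submission
  imports Defs
begin

text \<open>Let TC(A) = (\<Sum>i\<in>A. H(X_i)) - H(X_A) be the total correlation of a block A. Then
  \<Delta>(P) = (TC(M) - \<Sum>A\<in>P. TC(A)) / (|P| - 1), so with d = \<Delta>(S) = TC(M) / (m - 1) the
  inequality d \<le> \<Delta>(P) says exactly (\<Sum>A\<in>P. TC(A)) \<le> (\<Sum>A\<in>P. (|A| - 1) d).
  The only block of P_B that is not a singleton is the complement of B, so d \<le> \<Delta>(P_B) is the
  block-wise inequality TC(A) \<le> (|A| - 1) d for A = M - B, while singleton blocks satisfy it
  trivially. Summing the block-wise inequalities over the blocks of an arbitrary partition gives
  d \<le> \<Delta>(P), strictly as soon as some block is not a singleton.\<close>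

definition total_correlation :: "(nat \<Rightarrow> 'a) pmf \<Rightarrow> nat set \<Rightarrow> real" where
  "total_correlation X A = (\<Sum>i\<in>A. H X {i}) - H X A"

lemma total_correlation_singleton [simp]: "total_correlation X {i} = 0"
  by (simp add: total_correlation_def)

lemma card_Mset [simp]: "card (Mset m) = m"
  by (simp add: Mset_def)

lemma finite_Mset [simp]: "finite (Mset m)"
  by (simp add: Mset_def)

lemma sum_partition_on:
  assumes "partition_on M P" "finite M"
  shows "(\<Sum>A\<in>P. \<Sum>i\<in>A. f i) = (\<Sum>i\<in>M. f i)"
proof -
  have "\<Union>P = M" "disjoint P"
    using assms(1) by (auto simp: partition_on_def)
  moreover have "finite A" if "A \<in> P" for A
    using that \<open>\<Union>P = M\<close> assms(2) by (metis Union_upper finite_subset)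
  ultimately show ?thesis
    using sum.Union_disjoint[of P f] by (auto simp: pairwise_def disjnt_def)
qed

lemma Delta_eq_total_correlation:
  assumes "partition_on (Mset m) P"
  shows "Delta m X P =
    (total_correlation X (Mset m) - (\<Sum>A\<in>P. total_correlation X A)) / (real (card P) - 1)"
proof -
  have "(\<Sum>A\<in>P. total_correlation X A) = (\<Sum>i\<in>Mset m. H X {i}) - (\<Sum>A\<in>P. H X A)"
    using sum_partition_on[OF assms finite_Mset]
    by (simp add: total_correlation_def sum_subtractf)
  then show ?thesis
    by (simp add: Delta_def total_correlation_def)
qed

lemma card_singletons [simp]: "card (singletons m) = m"
  unfolding singletons_def by (subst card_image) (auto simp: inj_on_def)

lemma partition_on_singletons_Mset: "partition_on (Mset m) (singletons m)"
  by (simp add: singletons_def partition_on_singletons)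

lemma singletons_in_partitions2: "2 \<le> m \<Longrightarrow> singletons m \<in> partitions2 m"
  by (simp add: partitions2_def partition_on_singletons_Mset)

lemma Delta_singletons: "Delta m X (singletons m) = total_correlation X (Mset m) / (real m - 1)"
proof -
  have "(\<Sum>A\<in>singletons m. total_correlation X A) = 0"
    by (rule sum.neutral) (auto simp: singletons_def)
  then show ?thesis
    by (simp add: Delta_eq_total_correlation[OF partition_on_singletons_Mset])
qed

lemma Delta_singletons_eq_MI_iff:
  assumes "2 \<le> m"
  shows "Delta m X (singletons m) = MI m X \<longleftrightarrow>
    (\<forall>P\<in>partitions2 m. Delta m X (singletons m) \<le> Delta m X P)"
proof -
  have "finite (partitions2 m)"
    using finitely_many_partition_on[OF finite_Mset, of m]
    by (auto simp: partitions2_def intro: finite_subset)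
  then show ?thesis
    using singletons_in_partitions2[OF assms] unfolding MI_def
    by (auto intro: Min_eqI[symmetric])
qed

lemma Delta_singletons_le_Delta_iff:
  fixes X :: "(nat \<Rightarrow> 'a) pmf"
  assumes "P \<in> partitions2 m" "2 \<le> m"
  defines "d \<equiv> Delta m X (singletons m)"
  shows "d \<le> Delta m X P \<longleftrightarrow>
      (\<Sum>A\<in>P. total_correlation X A) \<le> (\<Sum>A\<in>P. (real (card A) - 1) * d)"
    and "d < Delta m X P \<longleftrightarrow>
      (\<Sum>A\<in>P. total_correlation X A) < (\<Sum>A\<in>P. (real (card A) - 1) * d)"
proof -
  have part: "partition_on (Mset m) P" and "2 \<le> card P"
    using assms(1) by (auto simp: partitions2_def)
  then have pos: "0 < real (card P) - 1"
    by simp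
  have "(\<Sum>A\<in>P. real (card A)) = real m"
    using sum_partition_on[OF part finite_Mset, of "\<lambda>_. 1 :: real"] by simp
  then have blocks: "(\<Sum>A\<in>P. (real (card A) - 1) * d) = (real m - real (card P)) * d"
    by (simp add: sum_distrib_right[symmetric] sum_subtractf)
  have "total_correlation X (Mset m) = (real m - 1) * d"
    using \<open>2 \<le> m\<close> by (simp add: d_def Delta_singletons)
  then show "d \<le> Delta m X P \<longleftrightarrow>
      (\<Sum>A\<in>P. total_correlation X A) \<le> (\<Sum>A\<in>P. (real (card A) - 1) * d)"
    and "d < Delta m X P \<longleftrightarrow>
      (\<Sum>A\<in>P. total_correlation X A) < (\<Sum>A\<in>P. (real (card A) - 1) * d)"
    unfolding Delta_eq_total_correlation[OF part] blocks
    using pos by (simp_all add: pos_le_divide_eq pos_less_divide_eq algebra_simps)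
qed

lemma partitions2_block_psubset:
  assumes "P \<in> partitions2 m" "A \<in> P"
  shows "A \<subset> Mset m"
proof -
  have part: "partition_on (Mset m) P" and "2 \<le> card P"
    using assms(1) by (auto simp: partitions2_def)
  then have "1 \<le> card (P - {A})"
    using assms(2) card_ge_0_finite[of P] by (simp add: card_Diff_singleton)
  then obtain A' where A': "A' \<in> P" "A' \<noteq> A"
    by (metis DiffE card.empty ex_in_conv not_one_le_zero singletonI)
  then have "A' \<noteq> {}" "A' \<subseteq> Mset m" "A' \<inter> A = {}"
    using part assms(2) by (auto simp: partition_on_def pairwise_def disjnt_def)
  moreover have "A \<subseteq> Mset m"
    using part assms(2) by (auto simp: partition_on_def)
  ultimately show ?thesis
    by auto
qed

lemma partitions2_block_card_ge_1:
  assumes "P \<in> partitions2 m" "A \<in> P"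
  shows "1 \<le> card A"
proof -
  have "A \<noteq> {}"
    using assms by (auto simp: partitions2_def partition_on_def)
  moreover have "finite A"
    using partitions2_block_psubset[OF assms] finite_subset[OF _ finite_Mset] by auto
  ultimately show ?thesis
    by (simp add: Suc_le_eq card_gt_0_iff)
qed

lemma Diff_partitions2_block_in_Omega:
  assumes "P \<in> partitions2 m" "A \<in> P" "2 \<le> card A"
  shows "Mset m - A \<in> Omega m"
proof -
  have "A \<subset> Mset m"
    using partitions2_block_psubset[OF assms(1,2)] .
  then have "card A < m" "card (Mset m - A) = m - card A"
    using psubset_card_mono[of "Mset m" A] finite_subset[of A "Mset m"]
    by (auto simp: card_Diff_subset)
  then show ?thesis
    using assms(3) by (auto simp: Omega_def)
qed

lemma partition_on_card_1_blocks:
  assumes "partition_on M P" "\<forall>A\<in>P. card A = 1"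
  shows "P = (\<lambda>i. {i}) ` M"
proof (intro equalityI subsetI)
  fix A
  assume "A \<in> P"
  then obtain i where "A = {i}"
    using assms(2) card_1_singletonE by blast
  with \<open>A \<in> P\<close> assms(1) show "A \<in> (\<lambda>i. {i}) ` M"
    by (auto simp: partition_on_def)
next
  fix S
  assume "S \<in> (\<lambda>i. {i}) ` M"
  then obtain i where "i \<in> M" "S = {i}"
    by blast
  moreover obtain A where "A \<in> P" "i \<in> A"
    using \<open>i \<in> M\<close> assms(1) by (auto simp: partition_on_def)
  moreover obtain j where "A = {j}"
    using \<open>A \<in> P\<close> assms(2) card_1_singletonE by blast
  ultimately show "S \<in> P"
    by auto
qed

lemma card_Diff_Omega:
  assumes "B \<in> Omega m"
  shows "2 \<le> card (Mset m - B)"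
proof -
  have "B \<subseteq> Mset m" "card B \<le> m - 2" "1 \<le> card B"
    using assms by (auto simp: Omega_def)
  then show ?thesis
    using finite_subset[of B "Mset m"] by (simp add: card_Diff_subset)
qed

lemma PB_in_partitions2:
  assumes "B \<in> Omega m"
  shows "PB m B \<in> partitions2 m"
proof -
  have B: "B \<subseteq> Mset m" "1 \<le> card B"
    using assms by (auto simp: Omega_def)
  have "2 \<le> card (Mset m - B)"
    using card_Diff_Omega[OF assms] .
  then have "Mset m - B \<noteq> {}" "Mset m - B \<notin> (\<lambda>b. {b}) ` B"
    by (metis card.empty not_numeral_le_zero) auto
  moreover have "finite B"
    using B(1) finite_subset[OF _ finite_Mset] by auto
  ultimately have "card (PB m B) = card B + 1"
    by (simp add: PB_def card_image inj_on_def)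
  moreover have "partition_on (Mset m) (PB m B)"
    unfolding PB_def using B(1) \<open>Mset m - B \<noteq> {}\<close>
    by (subst partition_on_insert)
      (auto simp: disjnt_def partition_on_singletons Diff_Diff_Int Int_absorb1)
  ultimately show ?thesis
    using B(2) by (simp add: partitions2_def)
qed

lemma PB_ne_singletons:
  assumes "B \<in> Omega m"
  shows "PB m B \<noteq> singletons m"
proof
  assume "PB m B = singletons m"
  then have "Mset m - B \<in> singletons m"
    by (auto simp: PB_def)
  then show False
    using card_Diff_Omega[OF assms] by (auto simp: singletons_def)
qed

lemma sum_PB:
  fixes f :: "nat set \<Rightarrow> 'b::comm_monoid_add"
  assumes "B \<in> Omega m" "\<And>b. f {b} = 0"
  shows "(\<Sum>A\<in>PB m B. f A) = f (Mset m - B)"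
proof -
  have "Mset m - B \<notin> (\<lambda>b. {b}) ` B"
    using card_Diff_Omega[OF assms(1)] by auto
  moreover have "finite B"
    using assms(1) finite_subset[OF _ finite_Mset] by (auto simp: Omega_def)
  ultimately show ?thesis
    by (simp add: PB_def assms(2) sum.reindex inj_on_def)
qed

lemma Delta_singletons_le_Delta_PB_iff:
  fixes X :: "(nat \<Rightarrow> 'a) pmf"
  assumes "B \<in> Omega m"
  defines "d \<equiv> Delta m X (singletons m)"
  shows "d \<le> Delta m X (PB m B) \<longleftrightarrow>
      total_correlation X (Mset m - B) \<le> (real (card (Mset m - B)) - 1) * d"
    and "d < Delta m X (PB m B) \<longleftrightarrow>
      total_correlation X (Mset m - B) < (real (card (Mset m - B)) - 1) * d"
proof -
  have "2 \<le> m"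
    using assms(1) by (auto simp: Omega_def)
  moreover have "(\<Sum>A\<in>PB m B. total_correlation X A) = total_correlation X (Mset m - B)"
    and "(\<Sum>A\<in>PB m B. (real (card A) - 1) * d) = (real (card (Mset m - B)) - 1) * d"
    using sum_PB[OF assms(1), of "total_correlation X"]
      sum_PB[OF assms(1), of "\<lambda>A. (real (card A) - 1) * d"] by simp_all
  ultimately show "d \<le> Delta m X (PB m B) \<longleftrightarrow>
      total_correlation X (Mset m - B) \<le> (real (card (Mset m - B)) - 1) * d"
    and "d < Delta m X (PB m B) \<longleftrightarrow>
      total_correlation X (Mset m - B) < (real (card (Mset m - B)) - 1) * d"
    using Delta_singletons_le_Delta_iff[OF PB_in_partitions2[OF assms(1)], of X]
    by (simp_all add: d_def)
qed

lemma total_correlation_block_bound_iff: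
  fixes X :: "(nat \<Rightarrow> 'a) pmf"
  assumes "P \<in> partitions2 m" "A \<in> P" "2 \<le> card A"
  defines "d \<equiv> Delta m X (singletons m)"
  shows "d \<le> Delta m X (PB m (Mset m - A)) \<longleftrightarrow>
      total_correlation X A \<le> (real (card A) - 1) * d"
    and "d < Delta m X (PB m (Mset m - A)) \<longleftrightarrow>
      total_correlation X A < (real (card A) - 1) * d"
proof -
  have "Mset m - (Mset m - A) = A"
    using partitions2_block_psubset[OF assms(1,2)] by auto
  then show "d \<le> Delta m X (PB m (Mset m - A)) \<longleftrightarrow>
      total_correlation X A \<le> (real (card A) - 1) * d"
    and "d < Delta m X (PB m (Mset m - A)) \<longleftrightarrow>
      total_correlation X A < (real (card A) - 1) * d"
    using Delta_singletons_le_Delta_PB_iff[OF Diff_partitions2_block_in_Omega[OF assms(1-3)], of X]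
    by (simp_all add: d_def)
qed

lemma partitions2_small_block:
  assumes "P \<in> partitions2 m" "A \<in> P" "\<not> 2 \<le> card A"
  shows "card A = 1" and "total_correlation X A = 0"
proof -
  show "card A = 1"
    using partitions2_block_card_ge_1[OF assms(1,2)] assms(3) by simp
  then show "total_correlation X A = 0"
    by (metis card_1_singletonE total_correlation_singleton)
qed

lemma Delta_singletons_le_all_iff:
  fixes X :: "(nat \<Rightarrow> 'a) pmf"
  assumes "2 \<le> m"
  defines "d \<equiv> Delta m X (singletons m)"
  shows "(\<forall>P\<in>partitions2 m. d \<le> Delta m X P) \<longleftrightarrow>
    (\<forall>B\<in>Omega m. d \<le> Delta m X (PB m B))"
proof
  assume "\<forall>P\<in>partitions2 m. d \<le> Delta m X P"
  then show "\<forall>B\<in>Omega m. d \<le> Delta m X (PB m B)"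
    using PB_in_partitions2 by blast
next
  assume PB_bound: "\<forall>B\<in>Omega m. d \<le> Delta m X (PB m B)"
  show "\<forall>P\<in>partitions2 m. d \<le> Delta m X P"
  proof
    fix P
    assume P: "P \<in> partitions2 m"
    have "total_correlation X A \<le> (real (card A) - 1) * d" if "A \<in> P" for A
      using PB_bound Diff_partitions2_block_in_Omega[OF P that]
        total_correlation_block_bound_iff(1)[OF P that, of X]
        partitions2_small_block(1)[OF P that] partitions2_small_block(2)[OF P that, of X]
      by (cases "2 \<le> card A") (simp_all add: d_def)
    then have "(\<Sum>A\<in>P. total_correlation X A) \<le> (\<Sum>A\<in>P. (real (card A) - 1) * d)"
      by (rule sum_mono)
    then show "d \<le> Delta m X P"
      using Delta_singletons_le_Delta_iff(1)[OF P assms(1), of X] by (simp add: d_def)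
  qed
qed

lemma Delta_singletons_less_all_iff:
  fixes X :: "(nat \<Rightarrow> 'a) pmf"
  assumes "2 \<le> m"
  defines "d \<equiv> Delta m X (singletons m)"
  shows "(\<forall>P\<in>partitions2 m. P \<noteq> singletons m \<longrightarrow> d < Delta m X P) \<longleftrightarrow>
    (\<forall>B\<in>Omega m. d < Delta m X (PB m B))"
proof
  assume "\<forall>P\<in>partitions2 m. P \<noteq> singletons m \<longrightarrow> d < Delta m X P"
  then show "\<forall>B\<in>Omega m. d < Delta m X (PB m B)"
    using PB_in_partitions2 PB_ne_singletons by simp
next
  assume PB_bound: "\<forall>B\<in>Omega m. d < Delta m X (PB m B)"
  show "\<forall>P\<in>partitions2 m. P \<noteq> singletons m \<longrightarrow> d < Delta m X P"
  proof (intro ballI impI)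
    fix P
    assume P: "P \<in> partitions2 m" and "P \<noteq> singletons m"
    have "\<exists>A\<in>P. 2 \<le> card A"
    proof (rule ccontr)
      assume "\<not> (\<exists>A\<in>P. 2 \<le> card A)"
      then have "\<forall>A\<in>P. card A = 1"
        using partitions2_small_block(1)[OF P] by blast
      then have "P = singletons m"
        using partition_on_card_1_blocks[of "Mset m" P] P by (simp add: partitions2_def singletons_def)
      with \<open>P \<noteq> singletons m\<close> show False ..
    qed
    then obtain A where A: "A \<in> P" "2 \<le> card A" ..
    have "total_correlation X A' \<le> (real (card A') - 1) * d" if "A' \<in> P" for A'
      using PB_bound Diff_partitions2_block_in_Omega[OF P that]
        total_correlation_block_bound_iff(2)[OF P that, of X]
        partitions2_small_block(1)[OF P that] partitions2_small_block(2)[OF P that, of X]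
      by (cases "2 \<le> card A'") (simp_all add: d_def)
    moreover have "total_correlation X A < (real (card A) - 1) * d"
      using PB_bound Diff_partitions2_block_in_Omega[OF P A]
        total_correlation_block_bound_iff(2)[OF P A, of X] by (simp add: d_def)
    moreover have "finite P"
      using P by (auto simp: partitions2_def intro: card_ge_0_finite)
    ultimately have "(\<Sum>A\<in>P. total_correlation X A) < (\<Sum>A\<in>P. (real (card A) - 1) * d)"
      using A(1) by (intro sum_strict_mono_ex1) auto
    then show "d < Delta m X P"
      using Delta_singletons_le_Delta_iff(2)[OF P assms(1), of X] by (simp add: d_def)
  qed
qed

lemma Delta_singletons_unique_minimizer_iff:
  fixes X :: "(nat \<Rightarrow> 'a) pmf"
  assumes "2 \<le> m"
  defines "d \<equiv> Delta m X (singletons m)"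
  shows "(d = MI m X \<and> (\<forall>P\<in>partitions2 m. Delta m X P = MI m X \<longrightarrow> P = singletons m))
      \<longleftrightarrow> (\<forall>P\<in>partitions2 m. P \<noteq> singletons m \<longrightarrow> d < Delta m X P)"
proof
  assume "d = MI m X \<and> (\<forall>P\<in>partitions2 m. Delta m X P = MI m X \<longrightarrow> P = singletons m)"
  then show "\<forall>P\<in>partitions2 m. P \<noteq> singletons m \<longrightarrow> d < Delta m X P"
    using Delta_singletons_eq_MI_iff[OF assms(1), of X] by (metis d_def order_le_neq_trans)
next
  assume strict: "\<forall>P\<in>partitions2 m. P \<noteq> singletons m \<longrightarrow> d < Delta m X P"
  then have "\<forall>P\<in>partitions2 m. d \<le> Delta m X P"
    by (metis order.strict_implies_order order.refl d_def)
  with strict show "d = MI m X \<and> (\<forall>P\<in>partitions2 m. Delta m X P = MI m X \<longrightarrow> P = singletons m)"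
    using Delta_singletons_eq_MI_iff[OF assms(1), of X] by (fastforce simp: d_def)
qed

theorem proposition2:
  fixes m :: nat and X :: "(nat \<Rightarrow> 'a) pmf"
  assumes "m \<ge> 3"
    and "finite (set_pmf X)"
  shows "(Delta m X (singletons m) = MI m X \<longleftrightarrow>
            (\<forall>B\<in>Omega m. Delta m X (singletons m) \<le> Delta m X (PB m B)))
       \<and> ((Delta m X (singletons m) = MI m X \<and>
            (\<forall>P\<in>partitions2 m. Delta m X P = MI m X \<longrightarrow> P = singletons m)) \<longleftrightarrow>
            (\<forall>B\<in>Omega m. Delta m X (singletons m) < Delta m X (PB m B)))"
proof -
  have m: "2 \<le> m"
    using assms(1) by simp
  show ?thesis
    using Delta_singletons_eq_MI_iff[OF m, of X] Delta_singletons_unique_minimizer_iff[OF m, of X]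
      Delta_singletons_le_all_iff[OF m, of X] Delta_singletons_less_all_iff[OF m, of X]
    by simp
qed

end
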